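(* Let $\mathcal M\subseteq\mathcal M^+$, $\alpha,\gamma>0$ and $\bar M\in\mathcal M^+$. For all $\varepsilon>0$, $$\mathrm{dec}^{\mathrm o}_{\mathrm r,\gamma}(\mathcal M_\alpha(\bar M)\cup\{\bar M\},\bar M)\le\mathrm{dec}^{\mathrm c}_{\mathrm r,\varepsilon}(\mathcal M\cup\{\bar M\},\bar M)+\max\Big\{0,\ \alpha+\frac1{2\gamma}-\frac{\gamma\varepsilon^2}{2}\Big\},$$ and in particular $$\mathrm{dec}^{\mathrm o}_{\mathrm r,\gamma}(\mathcal M_\alpha(\bar M)\cup\{\bar M\},\bar M)\le\mathrm{dec}^{\mathrm c}_{\mathrm r,\sqrt{2\alpha/\gamma}}(\mathcal M\cup\{\bar M\},\bar M)+\frac1{2\gamma}.$$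
   Context: Models are kernels $M:\Pi\to\Delta([0,1]\times\mathcal O)$ (rewards in $[0,1]$); $\mathcal M^+$ is the set of all models. $f^M(\pi)=\mathbb E_{(r,o)\sim M(\pi)}[r]$, $\pi_M\in\arg\max f^M$, $g^M(\pi)=f^M(\pi_M)-f^M(\pi)$; $D^2_H$ is squared Hellinger distance. For a class $\mathcal M'$: constrained regret DEC $\mathrm{dec}^{\mathrm c}_{\mathrm r,\varepsilon}(\mathcal M',\bar M)=\inf_{p\in\Delta(\Pi)}\sup_{M\in\mathcal M'}\{\mathbb E_{\pi\sim p}[g^M(\pi)]:\mathbb E_{\pi\sim p}[D^2_H(M(\pi),\bar M(\pi))]\le\varepsilon^2\}$ (value $0$ if empty); offset regret DEC $\mathrm{dec}^{\mathrm o}_{\mathrm r,\gamma}(\mathcal M',\bar M)=\inf_{p}\sup_{M\in\mathcal M'}\mathbb E_{\pi\sim p}[g^M(\pi)-\gamma D^2_H(M(\pi),\bar M(\pi))]$. Localized subclass: $\mathcal M_\alpha(\bar M)=\{M\in\mathcal M:f^M(\pi_M)\le f^{\bar M}(\pi_{\bar M})+\alpha\}$. *)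

theory Defs
  imports "HOL-Probability.Probability"
begin

definition RO :: "'o measure \<Rightarrow> (real \<times> 'o) measure" where
  "RO Obs = restrict_space borel {0..1::real} \<Otimes>\<^sub>M Obs"

definition models :: "'o measure \<Rightarrow> ('p \<Rightarrow> (real \<times> 'o) measure) set" where
  "models Obs = {M. \<forall>\<pi>. prob_space (M \<pi>) \<and> sets (M \<pi>) = sets (RO Obs)}"

text \<open>Sum measure P + Q (a dominating measure for both).\<close>
definition sum_meas :: "'a measure \<Rightarrow> 'a measure \<Rightarrow> 'a measure" where
  "sum_meas P Q = measure_of (space P) (sets P) (\<lambda>A. emeasure P A + emeasure Q A)"

definition hellinger_sq :: "'a measure \<Rightarrow> 'a measure \<Rightarrow> real" where
  "hellinger_sq P Q =
     (let \<nu> = sum_meas P Q in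
      enn2real (\<integral>\<^sup>+ x. ennreal ((sqrt (enn2real (RN_deriv \<nu> P x))
                                   - sqrt (enn2real (RN_deriv \<nu> Q x)))\<^sup>2) \<partial>\<nu>))"

definition fval :: "('p \<Rightarrow> (real \<times> 'o) measure) \<Rightarrow> 'p \<Rightarrow> real" where
  "fval M \<pi> = (\<integral>x. fst x \<partial>(M \<pi>))"

definition fstar :: "('p \<Rightarrow> (real \<times> 'o) measure) \<Rightarrow> real" where
  "fstar M = (SUP \<pi>. fval M \<pi>)"

definition gap :: "('p \<Rightarrow> (real \<times> 'o) measure) \<Rightarrow> 'p \<Rightarrow> real" where
  "gap M \<pi> = fstar M - fval M \<pi>"

definition Ep :: "'p pmf \<Rightarrow> ('p \<Rightarrow> real) \<Rightarrow> real" where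
  "Ep p h = measure_pmf.expectation p h"

definition dec_c :: "('p \<Rightarrow> (real \<times> 'o) measure) set \<Rightarrow> ('p \<Rightarrow> (real \<times> 'o) measure)
                     \<Rightarrow> real \<Rightarrow> real" where
  "dec_c Mc Mbar \<epsilon> =
     (INF p. (let S = {Ep p (gap M) | M. M \<in> Mc \<and>
                        Ep p (\<lambda>\<pi>. hellinger_sq (M \<pi>) (Mbar \<pi>)) \<le> \<epsilon>\<^sup>2}
              in if S = {} then 0 else Sup S))"

definition dec_o :: "('p \<Rightarrow> (real \<times> 'o) measure) set \<Rightarrow> ('p \<Rightarrow> (real \<times> 'o) measure)
                     \<Rightarrow> real \<Rightarrow> real" where
  "dec_o Mc Mbar \<gamma> =
     (INF p. SUP M\<in>Mc. Ep p (\<lambda>\<pi>. gap M \<pi> - \<gamma> * hellinger_sq (M \<pi>) (Mbar \<pi>)))"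

definition localized :: "('p \<Rightarrow> (real \<times> 'o) measure) set \<Rightarrow> ('p \<Rightarrow> (real \<times> 'o) measure)
                         \<Rightarrow> real \<Rightarrow> ('p \<Rightarrow> (real \<times> 'o) measure) set" where
  "localized Mc Mbar \<alpha> = {M \<in> Mc. fstar M \<le> fstar Mbar + \<alpha>}"

end

theory Submission
  imports Defs
begin

text \<open>
  Fix a distribution \<open>p\<close> over decisions and a model \<open>M\<close> of the localized class, and split on the
  Hellinger constraint \<open>E\<^sub>p D\<^sup>2(M, Mbar) \<le> \<epsilon>\<^sup>2\<close>. If it holds, the expected regret of \<open>M\<close> is one of
  the values whose supremum is the constrained DEC at \<open>p\<close>, and the offset penalty only helps.
  Otherwise the penalty \<open>\<gamma> E\<^sub>p D\<^sup>2\<close> exceeds \<open>\<gamma>\<epsilon>\<^sup>2/2 + (\<gamma>/2) E\<^sub>p D\<^sup>2\<close>, and its second half pays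
  for replacing \<open>M\<close> by \<open>Mbar\<close>: localization gives \<open>g(M) \<le> g(Mbar) + \<alpha> + f(Mbar) - f(M)\<close>, and for
  rewards in \<open>[0,1]\<close> the change of mean reward is at most \<open>(\<gamma>/2) D\<^sup>2 + 1/(2\<gamma>)\<close>, by the pointwise
  AM-GM bound \<open>(r - 1/2)(q - p) \<le> (\<gamma>/2)(\<surd>p - \<surd>q)\<^sup>2 + (p + q)/(4\<gamma>)\<close> for the densities \<open>p, q\<close>
  of the two laws. Since \<open>Mbar\<close> meets every constraint, \<open>E\<^sub>p g(Mbar)\<close> is again bounded by the
  constrained DEC. Choosing \<open>\<epsilon>\<^sup>2 = 2\<alpha>/\<gamma>\<close> cancels \<open>\<alpha>\<close>.
\<close>

section \<open>Hellinger distance and mean rewards\<close>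

lemma centered_mult_diff_le:
  fixes p q s g :: real
  assumes "0 \<le> p" "0 \<le> q" "\<bar>s\<bar> \<le> 1/2" "0 < g"
  shows "s * (q - p) \<le> g/2 * (sqrt p - sqrt q)\<^sup>2 + (p + q) / (4 * g)"
proof -
  obtain a b where ab: "0 \<le> a" "0 \<le> b" "p = a\<^sup>2" "q = b\<^sup>2"
    using assms(1,2) real_sqrt_pow2 real_sqrt_ge_zero by metis
  have "s\<^sup>2 \<le> (1/2)\<^sup>2"
    using assms(3) by (metis abs_ge_zero power2_abs power_mono)
  moreover have "(a + b)\<^sup>2 \<le> 2 * (a\<^sup>2 + b\<^sup>2)"
    using zero_le_power2[of "a - b"] by (simp add: power2_eq_square algebra_simps)
  ultimately have "s\<^sup>2 * (a + b)\<^sup>2 \<le> (1/2)\<^sup>2 * (2 * (a\<^sup>2 + b\<^sup>2))"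
    by (intro mult_mono) auto
  then have "2 * s\<^sup>2 * (a + b)\<^sup>2 \<le> a\<^sup>2 + b\<^sup>2"
    by (simp add: power2_eq_square)
  moreover have "2 * g\<^sup>2 * (b - a)\<^sup>2 + (a\<^sup>2 + b\<^sup>2) - 4 * g * (s * (b\<^sup>2 - a\<^sup>2))
      = 2 * (g * (b - a) - s * (a + b))\<^sup>2 + (a\<^sup>2 + b\<^sup>2 - 2 * s\<^sup>2 * (a + b)\<^sup>2)"
    by algebra
  ultimately have "4 * g * (s * (b\<^sup>2 - a\<^sup>2)) \<le> 2 * g\<^sup>2 * (b - a)\<^sup>2 + (a\<^sup>2 + b\<^sup>2)"
    using zero_le_power2[of "g * (b - a) - s * (a + b)"] by linarith
  then have "s * (b\<^sup>2 - a\<^sup>2) \<le> g/2 * (b - a)\<^sup>2 + (a\<^sup>2 + b\<^sup>2) / (4 * g)"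
    using assms(4) by (simp add: field_simps power2_eq_square[of g])
  then show ?thesis
    using ab by (simp add: power2_commute)
qed

lemma sets_sum_meas [simp]: "sets (sum_meas P Q) = sets P"
  unfolding sum_meas_def by (rule sets.sets_measure_of_eq)

lemma space_sum_meas [simp]: "space (sum_meas P Q) = space P"
  using sets_eq_imp_space_eq[OF sets_sum_meas] .

lemma emeasure_sum_meas:
  assumes "sets Q = sets P" and "A \<in> sets P"
  shows "emeasure (sum_meas P Q) A = emeasure P A + emeasure Q A"
  unfolding sum_meas_def
proof (rule emeasure_measure_of_sigma[OF sets.sigma_algebra_axioms _ _ assms(2)])
  show "positive (sets P) (\<lambda>A. emeasure P A + emeasure Q A)"
    by (simp add: positive_def)
  show "countably_additive (sets P) (\<lambda>A. emeasure P A + emeasure Q A)"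
    unfolding countably_additive_def
  proof (intro allI impI)
    fix F :: "nat \<Rightarrow> _" assume F: "range F \<subseteq> sets P" "disjoint_family F"
    then have "range F \<subseteq> sets Q" using assms(1) by simp
    then show "(\<Sum>i. emeasure P (F i) + emeasure Q (F i))
        = emeasure P (\<Union>(range F)) + emeasure Q (\<Union>(range F))"
      using suminf_emeasure[OF F] suminf_emeasure[OF _ F(2)] by (simp add: suminf_add[symmetric])
  qed
qed

lemma sum_meas_commute:
  assumes "sets Q = sets P"
  shows "sum_meas P Q = sum_meas Q P"
  using assms sets_eq_imp_space_eq[OF assms] by (simp add: sum_meas_def add.commute)

lemma finite_measure_sum_meas:
  assumes "finite_measure P" "finite_measure Q" "sets Q = sets P"
  shows "finite_measure (sum_meas P Q)"
proof (rule finite_measureI)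
  have "space Q = space P" using sets_eq_imp_space_eq[OF assms(3)] .
  then show "emeasure (sum_meas P Q) (space (sum_meas P Q)) \<noteq> \<infinity>"
    using emeasure_sum_meas[OF assms(3) sets.top] assms(1,2)
    by (simp add: finite_measure.emeasure_finite)
qed

lemma absolutely_continuous_sum_meas:
  assumes "sets Q = sets P"
  shows "absolutely_continuous (sum_meas P Q) P"
  unfolding absolutely_continuous_def
proof
  fix A assume "A \<in> null_sets (sum_meas P Q)"
  then show "A \<in> null_sets P"
    using emeasure_sum_meas[OF assms, of A] by (auto simp: null_sets_def)
qed

lemma integral_sum_meas_density:
  fixes f :: "'a \<Rightarrow> real"
  assumes "finite_measure P" "finite_measure Q" "sets Q = sets P" and f: "integrable P f"
  defines "p \<equiv> \<lambda>x. enn2real (RN_deriv (sum_meas P Q) P x)"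
  shows "integrable (sum_meas P Q) (\<lambda>x. p x * f x)"
    and "(\<integral>x. f x \<partial>P) = (\<integral>x. p x * f x \<partial>sum_meas P Q)"
proof -
  interpret finite_measure "sum_meas P Q"
    using finite_measure_sum_meas[OF assms(1-3)] .
  have P: "sigma_finite_measure P"
    using assms(1) by (simp add: finite_measure_def)
  have f_meas: "f \<in> borel_measurable (sum_meas P Q)"
    using borel_measurable_integrable[OF f] by (simp add: measurable_def)
  note RN = RN_deriv_integrable[OF P absolutely_continuous_sum_meas[OF assms(3)] _ f_meas]
    RN_deriv_integral[OF P absolutely_continuous_sum_meas[OF assms(3)] _ f_meas]
  show "integrable (sum_meas P Q) (\<lambda>x. p x * f x)"
    using RN(1) f by (simp add: p_def)
  show "(\<integral>x. f x \<partial>P) = (\<integral>x. p x * f x \<partial>sum_meas P Q)"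
    using RN(2) by (simp add: p_def)
qed

lemma RN_deriv_sum_meas_integral_eq_1:
  assumes "prob_space P" "prob_space Q" "sets Q = sets P"
  defines "p \<equiv> \<lambda>x. enn2real (RN_deriv (sum_meas P Q) P x)"
    and "q \<equiv> \<lambda>x. enn2real (RN_deriv (sum_meas P Q) Q x)"
  shows "integrable (sum_meas P Q) p" and "(\<integral>x. p x \<partial>sum_meas P Q) = 1"
    and "integrable (sum_meas P Q) q" and "(\<integral>x. q x \<partial>sum_meas P Q) = 1"
proof -
  interpret P: prob_space P by fact
  interpret Q: prob_space Q by fact
  note density_P = integral_sum_meas_density[OF P.finite_measure_axioms Q.finite_measure_axioms
      assms(3), of "\<lambda>_. 1"]
  note density_Q = integral_sum_meas_density[OF Q.finite_measure_axioms P.finite_measure_axioms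
      assms(3)[symmetric], of "\<lambda>_. 1", folded sum_meas_commute[OF assms(3)]]
  show "integrable (sum_meas P Q) p" "(\<integral>x. p x \<partial>sum_meas P Q) = 1"
    using density_P by (simp_all add: p_def P.prob_space)
  show "integrable (sum_meas P Q) q" "(\<integral>x. q x \<partial>sum_meas P Q) = 1"
    using density_Q by (simp_all add: q_def Q.prob_space)
qed

lemma hellinger_sq_self [simp]: "hellinger_sq P P = 0"
  by (simp add: hellinger_sq_def)

lemma hellinger_sq_nonneg: "0 \<le> hellinger_sq P Q"
  by (simp add: hellinger_sq_def Let_def)

lemma hellinger_sq_eq_integral:
  assumes "prob_space P" "prob_space Q" "sets Q = sets P"
  defines "p \<equiv> \<lambda>x. enn2real (RN_deriv (sum_meas P Q) P x)"
    and "q \<equiv> \<lambda>x. enn2real (RN_deriv (sum_meas P Q) Q x)"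
  shows "integrable (sum_meas P Q) (\<lambda>x. (sqrt (p x) - sqrt (q x))\<^sup>2)"
    and "hellinger_sq P Q = (\<integral>x. (sqrt (p x) - sqrt (q x))\<^sup>2 \<partial>sum_meas P Q)"
proof -
  note densities = RN_deriv_sum_meas_integral_eq_1[OF assms(1-3), folded p_def q_def]
  have "(\<lambda>x. (sqrt (p x) - sqrt (q x))\<^sup>2) \<in> borel_measurable (sum_meas P Q)"
    unfolding p_def q_def by measurable
  moreover have "(sqrt (p x) - sqrt (q x))\<^sup>2 \<le> p x + q x" for x
    by (simp add: p_def q_def power2_diff)
  ultimately show sq_diff_integrable: "integrable (sum_meas P Q) (\<lambda>x. (sqrt (p x) - sqrt (q x))\<^sup>2)"
    using Bochner_Integration.integrable_add[OF densities(1,3)]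
    by (rule_tac Bochner_Integration.integrable_bound) (auto simp: p_def q_def)
  have "hellinger_sq P Q
      = enn2real (\<integral>\<^sup>+x. ennreal ((sqrt (p x) - sqrt (q x))\<^sup>2) \<partial>sum_meas P Q)"
    unfolding hellinger_sq_def Let_def p_def q_def ..
  also have "\<dots> = (\<integral>x. (sqrt (p x) - sqrt (q x))\<^sup>2 \<partial>sum_meas P Q)"
    using sq_diff_integrable by (simp add: nn_integral_eq_integral integral_nonneg)
  finally show "hellinger_sq P Q = (\<integral>x. (sqrt (p x) - sqrt (q x))\<^sup>2 \<partial>sum_meas P Q)" .
qed

lemma hellinger_sq_le_2:
  assumes "prob_space P" "prob_space Q" "sets Q = sets P"
  shows "hellinger_sq P Q \<le> 2"
proof -
  define p q where "p x = enn2real (RN_deriv (sum_meas P Q) P x)"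
    and "q x = enn2real (RN_deriv (sum_meas P Q) Q x)" for x
  note densities = RN_deriv_sum_meas_integral_eq_1[OF assms, folded p_def q_def]
  note hellinger = hellinger_sq_eq_integral[OF assms, folded p_def q_def]
  have "hellinger_sq P Q \<le> (\<integral>x. p x + q x \<partial>sum_meas P Q)"
    unfolding hellinger(2)
    by (intro integral_mono hellinger(1) Bochner_Integration.integrable_add densities)
      (simp add: p_def q_def power2_diff)
  then show ?thesis
    using densities by simp
qed

lemma integral_diff_le_hellinger_sq:
  fixes r :: "'a \<Rightarrow> real"
  assumes "prob_space P" "prob_space Q" and sets_eq: "sets Q = sets P"
    and r_meas: "r \<in> borel_measurable P" and r_bounds: "\<And>x. x \<in> space P \<Longrightarrow> 0 \<le> r x \<and> r x \<le> 1"
    and "0 < g"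
  shows "(\<integral>x. r x \<partial>Q) - (\<integral>x. r x \<partial>P) \<le> g/2 * hellinger_sq P Q + 1 / (2 * g)"
proof -
  interpret P: prob_space P by fact
  interpret Q: prob_space Q by fact
  define p q where "p x = enn2real (RN_deriv (sum_meas P Q) P x)"
    and "q x = enn2real (RN_deriv (sum_meas P Q) Q x)" for x
  define \<nu> where "\<nu> = sum_meas P Q"
  have "integrable P r"
    using r_meas r_bounds by (intro P.integrable_const_bound[of _ 1]) auto
  note density_P = integral_sum_meas_density[OF P.finite_measure_axioms Q.finite_measure_axioms
      sets_eq this, folded p_def \<nu>_def]
  have "integrable Q r"
    using r_meas r_bounds sets_eq_imp_space_eq[OF sets_eq] measurable_cong_sets[OF sets_eq refl]
    by (intro Q.integrable_const_bound[of _ 1]) auto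
  note density_Q = integral_sum_meas_density[OF Q.finite_measure_axioms P.finite_measure_axioms
      sets_eq[symmetric] this, folded sum_meas_commute[OF sets_eq], folded q_def \<nu>_def]
  note densities = RN_deriv_sum_meas_integral_eq_1[OF assms(1-3), folded p_def q_def \<nu>_def]
  note hellinger = hellinger_sq_eq_integral[OF assms(1-3), folded p_def q_def \<nu>_def]
  \<comment> \<open>since \<open>\<integral>p = \<integral>q = 1\<close>, the reward may be centred at \<open>1/2\<close>\<close>
  have "(\<integral>x. r x \<partial>Q) - (\<integral>x. r x \<partial>P)
      = (\<integral>x. q x * r x - p x * r x - (q x / 2 - p x / 2) \<partial>\<nu>)"
    using density_P density_Q densities by simp
  also have "\<dots> = (\<integral>x. (r x - 1/2) * (q x - p x) \<partial>\<nu>)"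
    by (intro Bochner_Integration.integral_cong) (simp_all add: field_simps)
  also have "\<dots> \<le> (\<integral>x. g/2 * (sqrt (p x) - sqrt (q x))\<^sup>2 + (p x + q x) / (4 * g) \<partial>\<nu>)"
  proof (rule integral_mono)
    show "integrable \<nu> (\<lambda>x. (r x - 1/2) * (q x - p x))"
      using density_P density_Q densities by (simp add: algebra_simps)
    show "integrable \<nu> (\<lambda>x. g/2 * (sqrt (p x) - sqrt (q x))\<^sup>2 + (p x + q x) / (4 * g))"
      using hellinger densities by simp
    fix x assume "x \<in> space \<nu>"
    then have "\<bar>r x - 1/2\<bar> \<le> 1/2"
      using r_bounds[of x] by (auto simp: \<nu>_def abs_if)
    then show "(r x - 1/2) * (q x - p x) \<le> g/2 * (sqrt (p x) - sqrt (q x))\<^sup>2 + (p x + q x) / (4 * g)"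
      using centered_mult_diff_le \<open>0 < g\<close> by (simp add: p_def q_def)
  qed
  also have "\<dots> = g/2 * hellinger_sq P Q + 1 / (2 * g)"
    using hellinger densities by simp
  finally show ?thesis .
qed

lemma space_RO: "space (RO Obs) = {0..1} \<times> space Obs"
  by (simp add: RO_def space_pair_measure)

lemma measurable_fst_RO: "fst \<in> borel_measurable (RO Obs)"
  unfolding RO_def
  by (rule measurable_compose[OF measurable_fst measurable_restrict_space1[OF measurable_ident_sets]]) simp

lemma modelsD:
  assumes "M \<in> models Obs"
  shows "prob_space (M \<pi>)" and "sets (M \<pi>) = sets (RO Obs)"
  using assms by (auto simp: models_def)

lemma measurable_reward_model:
  assumes "M \<in> models Obs"
  shows "fst \<in> borel_measurable (M \<pi>)"
  using measurable_fst_RO measurable_cong_sets[OF modelsD(2)[OF assms] refl] by blast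

lemma reward_bounds_model:
  assumes "M \<in> models Obs" and "x \<in> space (M \<pi>)"
  shows "0 \<le> fst x \<and> fst x \<le> 1"
  using assms(2) sets_eq_imp_space_eq[OF modelsD(2)[OF assms(1)]] by (auto simp: space_RO)

lemma fval_bounds:
  assumes "M \<in> models Obs"
  shows "0 \<le> fval M \<pi> \<and> fval M \<pi> \<le> 1"
proof -
  interpret prob_space "M \<pi>"
    using modelsD(1)[OF assms] .
  have "integrable (M \<pi>) fst"
    using measurable_reward_model[OF assms] reward_bounds_model[OF assms]
    by (intro integrable_const_bound[of _ 1]) auto
  then have "fval M \<pi> \<le> (\<integral>x. 1 \<partial>M \<pi>)"
    unfolding fval_def using reward_bounds_model[OF assms] by (intro integral_mono) auto
  moreover have "0 \<le> fval M \<pi>"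
    unfolding fval_def using reward_bounds_model[OF assms] by (intro Bochner_Integration.integral_nonneg) auto
  ultimately show ?thesis
    by (simp add: prob_space)
qed

lemma gap_bounds:
  assumes "M \<in> models Obs"
  shows "0 \<le> gap M \<pi> \<and> gap M \<pi> \<le> 1"
proof -
  have "bdd_above (range (fval M))"
    using fval_bounds[OF assms] by (intro bdd_aboveI[of _ 1]) auto
  then have "fval M \<pi> \<le> fstar M"
    unfolding fstar_def by (intro cSUP_upper) auto
  moreover have "fstar M \<le> 1"
    unfolding fstar_def using fval_bounds[OF assms] by (intro cSUP_least) auto
  ultimately show ?thesis
    using fval_bounds[OF assms, of \<pi>] by (simp add: gap_def)
qed

lemma fval_diff_le_hellinger_sq:
  assumes "M \<in> models Obs" "M' \<in> models Obs" "0 < \<gamma>"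
  shows "fval M' \<pi> - fval M \<pi> \<le> \<gamma>/2 * hellinger_sq (M \<pi>) (M' \<pi>) + 1 / (2 * \<gamma>)"
  unfolding fval_def
  using modelsD[OF assms(1)] modelsD[OF assms(2)] measurable_reward_model[OF assms(1)]
    reward_bounds_model[OF assms(1)] assms(3)
  by (intro integral_diff_le_hellinger_sq) auto

lemma gap_le_gap_add_hellinger_sq:
  assumes "M \<in> models Obs" "Mbar \<in> models Obs" "0 < \<gamma>" and "fstar M \<le> fstar Mbar + \<alpha>"
  shows "gap M \<pi> \<le> gap Mbar \<pi> + \<alpha> + \<gamma>/2 * hellinger_sq (M \<pi>) (Mbar \<pi>) + 1 / (2 * \<gamma>)"
  using fval_diff_le_hellinger_sq[OF assms(1-3), of \<pi>] assms(4) by (simp add: gap_def)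

section \<open>Decision-estimation coefficients\<close>

definition constrained_regrets ::
    "('p \<Rightarrow> (real \<times> 'o) measure) set \<Rightarrow> ('p \<Rightarrow> (real \<times> 'o) measure) \<Rightarrow> real \<Rightarrow> 'p pmf
     \<Rightarrow> real set" where
  "constrained_regrets Mc Mbar \<epsilon> p =
     {Ep p (gap M) | M. M \<in> Mc \<and> Ep p (\<lambda>\<pi>. hellinger_sq (M \<pi>) (Mbar \<pi>)) \<le> \<epsilon>\<^sup>2}"

definition offset_regret ::
    "('p \<Rightarrow> (real \<times> 'o) measure) \<Rightarrow> real \<Rightarrow> 'p pmf \<Rightarrow> ('p \<Rightarrow> (real \<times> 'o) measure) \<Rightarrow> real" where
  "offset_regret Mbar \<gamma> p M = Ep p (\<lambda>\<pi>. gap M \<pi> - \<gamma> * hellinger_sq (M \<pi>) (Mbar \<pi>))"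

lemma integrable_pmf_bounded:
  fixes f :: "'a \<Rightarrow> real"
  assumes "\<And>x. \<bar>f x\<bar> \<le> B"
  shows "integrable (measure_pmf p) f"
  using assms by (intro measure_pmf.integrable_const_bound[where B = B]) auto

lemma integrable_gap:
  assumes "M \<in> models Obs"
  shows "integrable (measure_pmf p) (gap M)"
  using gap_bounds[OF assms] by (intro integrable_pmf_bounded[of _ 1]) auto

lemma integrable_hellinger_sq_models:
  assumes "M \<in> models Obs" "M' \<in> models Obs"
  shows "integrable (measure_pmf p) (\<lambda>\<pi>. hellinger_sq (M \<pi>) (M' \<pi>))"
  using modelsD[OF assms(1)] modelsD[OF assms(2)]
  by (intro integrable_pmf_bounded[of _ 2]) (simp add: hellinger_sq_nonneg hellinger_sq_le_2)

lemma Ep_gap_bounds: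
  assumes "M \<in> models Obs"
  shows "0 \<le> Ep p (gap M) \<and> Ep p (gap M) \<le> 1"
  unfolding Ep_def using gap_bounds[OF assms] integrable_gap[OF assms]
  by (auto intro: Bochner_Integration.integral_nonneg measure_pmf.integral_le_const)

lemma Ep_gap_le_Sup_constrained_regrets:
  assumes "Mc \<subseteq> models Obs" "M \<in> Mc" "Ep p (\<lambda>\<pi>. hellinger_sq (M \<pi>) (Mbar \<pi>)) \<le> \<epsilon>\<^sup>2"
  shows "Ep p (gap M) \<le> Sup (constrained_regrets Mc Mbar \<epsilon> p)"
proof (rule cSup_upper)
  show "Ep p (gap M) \<in> constrained_regrets Mc Mbar \<epsilon> p"
    using assms(2,3) unfolding constrained_regrets_def by blast
  show "bdd_above (constrained_regrets Mc Mbar \<epsilon> p)"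
    unfolding constrained_regrets_def using assms(1) Ep_gap_bounds
    by (intro bdd_aboveI[of _ 1]) blast
qed

lemma dec_c_eq_INF_Sup:
  assumes "Mbar \<in> Mc"
  shows "dec_c Mc Mbar \<epsilon> = (INF p. Sup (constrained_regrets Mc Mbar \<epsilon> p))"
proof -
  have "constrained_regrets Mc Mbar \<epsilon> p \<noteq> {}" for p
    using assms unfolding constrained_regrets_def by (auto simp: Ep_def)
  then show ?thesis
    unfolding dec_c_def constrained_regrets_def[symmetric] by simp
qed

lemma offset_regret_le_Sup_constrained_regrets:
  assumes Mc: "Mc \<subseteq> models Obs" and "Mbar \<in> Mc" "M \<in> Mc" "0 < \<gamma>"
    and localization: "fstar M \<le> fstar Mbar + \<alpha>"
  shows "offset_regret Mbar \<gamma> p M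
    \<le> Sup (constrained_regrets Mc Mbar \<epsilon> p) + max 0 (\<alpha> + 1 / (2 * \<gamma>) - \<gamma> * \<epsilon>\<^sup>2 / 2)"
proof -
  define H where "H = (\<lambda>\<pi>. hellinger_sq (M \<pi>) (Mbar \<pi>))"
  have models: "M \<in> models Obs" "Mbar \<in> models Obs"
    using assms by auto
  note integrable_terms = integrable_gap[OF models(1)] integrable_gap[OF models(2)]
    integrable_hellinger_sq_models[OF models, folded H_def]
  have "0 \<le> Ep p H"
    unfolding Ep_def H_def by (intro Bochner_Integration.integral_nonneg) (simp add: hellinger_sq_nonneg)
  have offset: "offset_regret Mbar \<gamma> p M = Ep p (gap M) - \<gamma> * Ep p H"
    unfolding offset_regret_def Ep_def using integrable_terms by (simp add: H_def)
  show ?thesis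
  proof (cases "Ep p H \<le> \<epsilon>\<^sup>2")
    case True
    then have "Ep p (gap M) \<le> Sup (constrained_regrets Mc Mbar \<epsilon> p)"
      using Ep_gap_le_Sup_constrained_regrets[OF Mc \<open>M \<in> Mc\<close>] by (simp add: H_def)
    then show ?thesis
      using offset \<open>0 \<le> Ep p H\<close> \<open>0 < \<gamma>\<close> by (smt (verit) max.cobounded1 mult_nonneg_nonneg)
  next
    case False
    \<comment> \<open>half of the offset penalty pays for replacing \<open>M\<close> by \<open>Mbar\<close>\<close>
    have "gap M \<pi> - \<gamma> * H \<pi> \<le> gap Mbar \<pi> + \<alpha> + 1 / (2 * \<gamma>) - \<gamma>/2 * H \<pi>" for \<pi>
      using gap_le_gap_add_hellinger_sq[OF models \<open>0 < \<gamma>\<close> localization, of \<pi>] by (simp add: H_def)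
    then have "offset_regret Mbar \<gamma> p M \<le> Ep p (\<lambda>\<pi>. gap Mbar \<pi> + \<alpha> + 1 / (2 * \<gamma>) - \<gamma>/2 * H \<pi>)"
      unfolding offset_regret_def Ep_def using integrable_terms
      by (intro integral_mono) (auto simp: H_def)
    also have "\<dots> = Ep p (gap Mbar) + \<alpha> + 1 / (2 * \<gamma>) - \<gamma>/2 * Ep p H"
      unfolding Ep_def using integrable_terms by simp
    also have "\<dots> \<le> Sup (constrained_regrets Mc Mbar \<epsilon> p) + (\<alpha> + 1 / (2 * \<gamma>) - \<gamma> * \<epsilon>\<^sup>2 / 2)"
    proof -
      have "\<gamma> * \<epsilon>\<^sup>2 \<le> \<gamma> * Ep p H"
        using False \<open>0 < \<gamma>\<close> by (intro mult_left_mono) auto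
      then show ?thesis
        using Ep_gap_le_Sup_constrained_regrets[OF Mc \<open>Mbar \<in> Mc\<close>, of p Mbar \<epsilon>]
        by (simp add: Ep_def)
    qed
    finally show ?thesis
      by simp
  qed
qed

lemma cINF_cSUP_le_cINF_add:
  fixes F :: "'a \<Rightarrow> 'b \<Rightarrow> real"
  assumes "w \<in> C" "\<And>x. b \<le> F x w" "\<And>x m. m \<in> C \<Longrightarrow> F x m \<le> G x + c"
  shows "(INF x. SUP m\<in>C. F x m) \<le> (INF x. G x) + c"
proof -
  have "(INF x. SUP m\<in>C. F x m) - c \<le> G x" for x
  proof -
    have bdd: "bdd_above (F y ` C)" for y
      using assms(3) by (intro bdd_aboveI2) auto
    have "b \<le> (SUP m\<in>C. F y m)" for y
      using assms(2)[of y] cSUP_upper[OF assms(1) bdd] by (rule order_trans)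
    then have "(INF x. SUP m\<in>C. F x m) \<le> (SUP m\<in>C. F x m)"
      by (intro cINF_lower bdd_belowI2) auto
    also have "\<dots> \<le> G x + c"
      using assms(1,3) by (intro cSUP_least) auto
    finally show ?thesis
      by simp
  qed
  then have "(INF x. SUP m\<in>C. F x m) - c \<le> (INF x. G x)"
    by (intro cINF_greatest) auto
  then show ?thesis
    by simp
qed

lemma dec_o_le_dec_c_add:
  assumes "Mc \<subseteq> models Obs" "Mbar \<in> models Obs" "0 \<le> \<alpha>" "0 < \<gamma>"
  shows "dec_o (localized Mc Mbar \<alpha> \<union> {Mbar}) Mbar \<gamma>
    \<le> dec_c (Mc \<union> {Mbar}) Mbar \<epsilon> + max 0 (\<alpha> + 1 / (2 * \<gamma>) - \<gamma> * \<epsilon>\<^sup>2 / 2)"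
proof -
  have "dec_o (localized Mc Mbar \<alpha> \<union> {Mbar}) Mbar \<gamma>
      = (INF p. SUP M\<in>localized Mc Mbar \<alpha> \<union> {Mbar}. offset_regret Mbar \<gamma> p M)"
    unfolding dec_o_def offset_regret_def ..
  also have "\<dots> \<le> (INF p. Sup (constrained_regrets (Mc \<union> {Mbar}) Mbar \<epsilon> p))
      + max 0 (\<alpha> + 1 / (2 * \<gamma>) - \<gamma> * \<epsilon>\<^sup>2 / 2)"
  proof (rule cINF_cSUP_le_cINF_add[where w = Mbar and b = 0])
    show "0 \<le> offset_regret Mbar \<gamma> p Mbar" for p
      using Ep_gap_bounds[OF assms(2)] by (simp add: offset_regret_def)
    show "offset_regret Mbar \<gamma> p M \<le> Sup (constrained_regrets (Mc \<union> {Mbar}) Mbar \<epsilon> p)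
        + max 0 (\<alpha> + 1 / (2 * \<gamma>) - \<gamma> * \<epsilon>\<^sup>2 / 2)"
      if "M \<in> localized Mc Mbar \<alpha> \<union> {Mbar}" for p M
      using that assms
      by (intro offset_regret_le_Sup_constrained_regrets[where Obs = Obs]) (auto simp: localized_def)
  qed simp
  also have "\<dots> = dec_c (Mc \<union> {Mbar}) Mbar \<epsilon> + max 0 (\<alpha> + 1 / (2 * \<gamma>) - \<gamma> * \<epsilon>\<^sup>2 / 2)"
    by (simp add: dec_c_eq_INF_Sup)
  finally show ?thesis .
qed

theorem proposition4p7:
  fixes Obs :: "'o measure"
    and Mc :: "('p \<Rightarrow> (real \<times> 'o) measure) set"
    and Mbar :: "'p \<Rightarrow> (real \<times> 'o) measure"
    and \<alpha> \<gamma> :: real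
  assumes "Mc \<subseteq> models Obs"
    and "Mbar \<in> models Obs"
    and "\<alpha> > 0" and "\<gamma> > 0"
  shows "(\<forall>\<epsilon>>0. dec_o (localized Mc Mbar \<alpha> \<union> {Mbar}) Mbar \<gamma>
            \<le> dec_c (Mc \<union> {Mbar}) Mbar \<epsilon> + max 0 (\<alpha> + 1 / (2 * \<gamma>) - \<gamma> * \<epsilon>\<^sup>2 / 2))
       \<and> dec_o (localized Mc Mbar \<alpha> \<union> {Mbar}) Mbar \<gamma>
            \<le> dec_c (Mc \<union> {Mbar}) Mbar (sqrt (2 * \<alpha> / \<gamma>)) + 1 / (2 * \<gamma>)"
proof -
  note bound = dec_o_le_dec_c_add[OF assms(1,2) less_imp_le[OF assms(3)] assms(4)]
  have "\<gamma> * (sqrt (2 * \<alpha> / \<gamma>))\<^sup>2 / 2 = \<alpha>"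
    using assms(3,4) by simp
  then show ?thesis
    using bound[of "sqrt (2 * \<alpha> / \<gamma>)"] bound assms(4) by simp
qed

end
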